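(* Let $1\le l\le m$ and $0\le r\le\lfloor(m-l-1)/2\rfloor$. Then the binary convolutional code $C=\Gamma_2G$ generated by the semi-infinite matrix $G$ described in the context is self-orthogonal, i.e. $C\subseteq C^\perp$.
   Context: For $u,v\in\mathbf F_2^N$ the boolean product is $uv=(u_1v_1,\dots,u_Nv_N)$. For $s\ge1$ let $b_0\in\mathbf F_2^{2^s}$ be all-ones and for $1\le i\le s$ let $b_i\in\mathbf F_2^{2^s}$ be the concatenation of $2^{s-i}$ blocks $(\mathbf 0\,\mathbf 1)$ with $\mathbf 0,\mathbf 1\in\mathbf F_2^{2^{i-1}}$ constant. Let $B_s^i$ be the matrix whose rows are all products of $i$ distinct elements of $\{b_1,\dots,b_s\}$ ($B_s^0=b_0$; empty for $i<0$ or $i>s$), and $G_s^r$ the matrix with rows $B_s^r,\dots,B_s^0$ stacked (empty if $r<0$), a generator matrix of the Reed–Muller code $\mathcal R(r,s)$. Let $w_j=(1,1,0,\dots,0)\in\mathbf F_2^{2^j}$ and $c\,w_j$ the concatenation of $c$ copies. For $0\le i\le l-1$, $M_{i,l}=(2^{l-i-1}w_{i+1})\otimes B_{m-l}^{r-i}$ (Kronecker product), and $M_{l,l}=[G_{m-l}^{r-l}\ 0\ \cdots\ 0]$ with $2^m$ columns. Define $G_0,\dots,G_{2^l-1}$ (each with $2^{m-l}$ columns) by $[G_0\ \cdots\ G_{2^l-1}]$ = row blocks $M_{0,l},\dots,M_{l,l}$ stacked. $G$ is the semi-infinite matrix whose $j$-th block row has $G_0,\dots,G_{2^l-1}$ in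 block columns $j,\dots,j+2^l-1$ and zeros elsewhere. $\Gamma_2$ = finitely supported binary sequences; $C^\perp$ is the Euclidean dual in $\Gamma_2$. *)

theory Defs
  imports Main "HOL-Library.Z2"
begin

text \<open>Binary vectors of finite length are lists over the field bit = F_2;
  matrices are lists of rows.\<close>

type_synonym vec = "bit list"
type_synonym mat = "bit list list"

definition bprod :: "vec \<Rightarrow> vec \<Rightarrow> vec" where
  "bprod u v = map2 (*) u v"

text \<open>b_0 = all ones of length 2^s; for 1 \<le> i \<le> s, b_i is 2^(s-i) blocks (0 1),
  each of 0, 1 constant of length 2^(i-1). (0-based position k is 1 iff
  k div 2^(i-1) is odd.)\<close>
definition bvec :: "nat \<Rightarrow> nat \<Rightarrow> vec" where
  "bvec s i = (if i = 0 then replicate (2^s) 1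
     else map (\<lambda>k. if odd (k div 2^(i-1)) then 1 else 0) [0..<2^s])"

text \<open>B_s^i: rows are all products of i distinct elements of {b_1,...,b_s}
  (each i-subset taken once); B_s^0 = b_0; empty for i < 0 or i > s.\<close>
definition Bmat :: "nat \<Rightarrow> int \<Rightarrow> mat" where
  "Bmat s i = (if i < 0 then []
     else map (\<lambda>S. foldr bprod (map (bvec s) S) (bvec s 0))
              (filter (\<lambda>S. int (length S) = i) (subseqs [1..<s+1])))"

definition Gmat_RM :: "nat \<Rightarrow> int \<Rightarrow> mat" where
  "Gmat_RM s r = concat (map (Bmat s) (rev [0..r]))"

definition wvec :: "nat \<Rightarrow> vec" where
  "wvec j = [1,1] @ replicate (2^j - 2) 0"

definition rep_vec :: "nat \<Rightarrow> vec \<Rightarrow> vec" where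
  "rep_vec c v = concat (replicate c v)"

definition kron_row :: "vec \<Rightarrow> mat \<Rightarrow> mat" where
  "kron_row a B = map (\<lambda>\<beta>. concat (map (\<lambda>x. map ((*) x) \<beta>) a)) B"

definition Mblk :: "nat \<Rightarrow> nat \<Rightarrow> int \<Rightarrow> nat \<Rightarrow> mat" where
  "Mblk m l r i = (if i < l
     then kron_row (rep_vec (2^(l-i-1)) (wvec (i+1))) (Bmat (m-l) (r - int i))
     else map (\<lambda>g. g @ replicate (2^m - length g) 0) (Gmat_RM (m-l) (r - int l)))"

text \<open>The stacked matrix [G_0 ... G_{2^l-1}] = M_{0,l}; ...; M_{l,l}.\<close>
definition Mstack :: "nat \<Rightarrow> nat \<Rightarrow> int \<Rightarrow> mat" where
  "Mstack m l r = concat (map (Mblk m l r) [0..<l+1])"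

text \<open>The semi-infinite matrix G: row index q = j * k + \<rho> (block row j, row \<rho> of the
  stack, k = number of rows of the stack), column index p. Its j-th block row is the
  stack shifted right by j block columns of width 2^(m-l).\<close>
definition semiG :: "nat \<Rightarrow> nat \<Rightarrow> int \<Rightarrow> nat \<Rightarrow> nat \<Rightarrow> bit" where
  "semiG m l r q p = (let M = Mstack m l r; k = length M; n = 2^(m-l);
      j = q div k; \<rho> = q mod k in
      if j * n \<le> p \<and> p < j * n + 2^m then (M ! \<rho>) ! (p - j * n) else 0)"

definition Gamma2 :: "(nat \<Rightarrow> bit) set" where
  "Gamma2 = {v. finite {p. v p \<noteq> 0}}"

text \<open>The code \<Gamma>_2 G generated by a semi-infinite matrix (row index \<Rightarrow> column index \<Rightarrow> entry).\<close>
definition gen_code :: "(nat \<Rightarrow> nat \<Rightarrow> bit) \<Rightarrow> (nat \<Rightarrow> bit) set" where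
  "gen_code Gm = {c. \<exists>u \<in> Gamma2. c = (\<lambda>p. \<Sum>q\<in>{q. u q \<noteq> 0}. u q * Gm q p)}"

definition inner2 :: "(nat \<Rightarrow> bit) \<Rightarrow> (nat \<Rightarrow> bit) \<Rightarrow> bit" where
  "inner2 u v = (\<Sum>p\<in>{p. u p \<noteq> 0 \<and> v p \<noteq> 0}. u p * v p)"

definition dual_code :: "(nat \<Rightarrow> bit) set \<Rightarrow> (nat \<Rightarrow> bit) set" where
  "dual_code C = {v \<in> Gamma2. \<forall>c \<in> C. inner2 c v = 0}"

end

theory Submission
  imports Defs
begin

(*
  Write s = m - l and read a position k < 2^s inside a block of width 2^s as the binary
  vector of its bits; then b_i is the coordinate function "bit i-1 of k", and every row of
  B_s^d is a monomial of degree d on this Boolean cube. The Kronecker factors w only scale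
  such rows and M_{l,l} contributes a single block of G_s^(r-l), so every block of every row
  of G is a multiple of a monomial of degree at most r. The product of two such blocks is a
  monomial of degree at most 2r < s; it misses some coordinate, so its number of ones is
  even. Hence any two rows of G are orthogonal, and by bilinearity so are any two codewords.
*)

(* Reason about bit as the field F_2 rather than through the bitwise normal forms of Z2. *)
declare mult_bit_eq_and [simp del] add_bit_eq_xor [simp del]

section \<open>Codes generated by a matrix with orthogonal rows\<close>

lemma inner2_eq_sum:
  assumes "finite A" "{p. u p \<noteq> 0} \<subseteq> A"
  shows "inner2 u v = (\<Sum>p\<in>A. u p * v p)"
  unfolding inner2_def using assms by (intro sum.mono_neutral_left) auto

lemma support_linear_combination_subset:
  fixes u :: "'b \<Rightarrow> 'a::semiring_0"
  shows "{p. (\<Sum>q\<in>S. u q * G q p) \<noteq> 0} \<subseteq> (\<Union>q\<in>S. {p. G q p \<noteq> 0})"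
proof
  fix p
  assume "p \<in> {p. (\<Sum>q\<in>S. u q * G q p) \<noteq> 0}"
  then have "(\<Sum>q\<in>S. u q * G q p) \<noteq> 0"
    by simp
  then obtain q where "q \<in> S" "u q * G q p \<noteq> 0"
    by (rule sum.not_neutral_contains_not_neutral)
  moreover from this(2) have "G q p \<noteq> 0"
    by (metis mult_zero_right)
  ultimately show "p \<in> (\<Union>q\<in>S. {p. G q p \<noteq> 0})"
    by blast
qed

lemma gen_code_subset_Gamma2:
  assumes "\<And>q. G q \<in> Gamma2"
  shows "gen_code G \<subseteq> Gamma2"
proof
  fix c
  assume "c \<in> gen_code G"
  then obtain u where u: "u \<in> Gamma2" "c = (\<lambda>p. \<Sum>q\<in>{q. u q \<noteq> 0}. u q * G q p)"
    unfolding gen_code_def by blast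
  have "{p. c p \<noteq> 0} \<subseteq> (\<Union>q\<in>{q. u q \<noteq> 0}. {p. G q p \<noteq> 0})"
    unfolding u(2) by (rule support_linear_combination_subset)
  moreover have "finite (\<Union>q\<in>{q. u q \<noteq> 0}. {p. G q p \<noteq> 0})"
    using u(1) assms by (auto simp: Gamma2_def)
  ultimately show "c \<in> Gamma2"
    unfolding Gamma2_def using finite_subset by blast
qed

lemma inner2_linear_combinations:
  assumes "\<And>q. G q \<in> Gamma2" "finite Su" "finite Sv"
  shows "inner2 (\<lambda>p. \<Sum>q\<in>Su. u q * G q p) (\<lambda>p. \<Sum>q'\<in>Sv. v q' * G q' p)
    = (\<Sum>q\<in>Su. \<Sum>q'\<in>Sv. u q * v q' * inner2 (G q) (G q'))"
proof -
  define A where "A = (\<Union>q\<in>Su. {p. G q p \<noteq> 0})"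
  have A: "finite A"
    using assms by (auto simp: A_def Gamma2_def)
  have "inner2 (\<lambda>p. \<Sum>q\<in>Su. u q * G q p) (\<lambda>p. \<Sum>q'\<in>Sv. v q' * G q' p)
      = (\<Sum>p\<in>A. (\<Sum>q\<in>Su. u q * G q p) * (\<Sum>q'\<in>Sv. v q' * G q' p))"
    unfolding A_def by (intro inner2_eq_sum[OF A[unfolded A_def]] support_linear_combination_subset)
  also have "\<dots> = (\<Sum>p\<in>A. \<Sum>q\<in>Su. \<Sum>q'\<in>Sv. u q * v q' * (G q p * G q' p))"
    by (simp add: sum_product ac_simps)
  also have "\<dots> = (\<Sum>q\<in>Su. \<Sum>q'\<in>Sv. \<Sum>p\<in>A. u q * v q' * (G q p * G q' p))"
    by (simp only: sum.swap[where A = A])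
  also have "\<dots> = (\<Sum>q\<in>Su. \<Sum>q'\<in>Sv. u q * v q' * (\<Sum>p\<in>A. G q p * G q' p))"
    by (simp only: sum_distrib_left)
  also have "\<dots> = (\<Sum>q\<in>Su. \<Sum>q'\<in>Sv. u q * v q' * inner2 (G q) (G q'))"
    using A by (intro sum.cong refl) (auto simp: A_def intro!: inner2_eq_sum[symmetric])
  finally show ?thesis .
qed

lemma gen_code_self_orthogonal:
  assumes "\<And>q. G q \<in> Gamma2" "\<And>q q'. inner2 (G q) (G q') = 0"
  shows "gen_code G \<subseteq> dual_code (gen_code G)"
proof
  fix c
  assume c: "c \<in> gen_code G"
  have "inner2 c' c = 0" if c': "c' \<in> gen_code G" for c'
  proof -
    obtain u where "u \<in> Gamma2" "c' = (\<lambda>p. \<Sum>q\<in>{q. u q \<noteq> 0}. u q * G q p)"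
      using c' unfolding gen_code_def by blast
    moreover obtain v where "v \<in> Gamma2" "c = (\<lambda>p. \<Sum>q\<in>{q. v q \<noteq> 0}. v q * G q p)"
      using c unfolding gen_code_def by blast
    ultimately show ?thesis
      unfolding Gamma2_def
      by (simp only: mem_Collect_eq inner2_linear_combinations[OF assms(1)] assms(2)
          mult_zero_right sum.neutral_const)
  qed
  then show "c \<in> dual_code (gen_code G)"
    using c gen_code_subset_Gamma2[of G] assms(1) unfolding dual_code_def by blast
qed

section \<open>Monomials on the Boolean cube\<close>

lemma bit_add_self [simp]: "(x::bit) + x = 0"
  by (cases x) simp_all

lemma sum_lessThan_add:
  "(\<Sum>k<a + b. f k) = (\<Sum>k<a. f k) + (\<Sum>k<b. f (a + k))"
  for f :: "nat \<Rightarrow> 'a::comm_monoid_add"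
  by (induction b) (simp_all add: add.assoc)

lemma sum_lessThan_mult_blocks:
  "(\<Sum>p<N * n. f p) = (\<Sum>b<N. \<Sum>k<n. f (b * n + k))"
  for f :: "nat \<Rightarrow> 'a::comm_monoid_add"
proof (induction N)
  case (Suc N)
  have "(\<Sum>p<Suc N * n. f p) = (\<Sum>p<N * n + n. f p)"
    by (simp add: add.commute)
  then show ?case
    using Suc.IH by (simp only: sum_lessThan_add sum.lessThan_Suc)
qed simp

lemma bit_add_exp_below:
  fixes k :: nat
  assumes "k < 2^s"
  shows "bit (k + 2^s) i \<longleftrightarrow> bit k i \<or> i = s"
proof -
  have "\<not> bit k s"
    using assms by (simp add: bit_iff_odd)
  then have "k + 2^s = or k (2^s)"
    by (intro disjunctive_add_eq_or bit_eqI) (auto simp: bit_and_iff bit_exp_iff)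
  then show ?thesis
    by (simp add: bit_or_iff bit_exp_iff)
qed

definition cube_monomial :: "nat set \<Rightarrow> nat \<Rightarrow> bit" where
  "cube_monomial U k = of_bool (\<forall>i\<in>U. bit k i)"

lemma cube_monomial_mult:
  "cube_monomial U k * cube_monomial V k = cube_monomial (U \<union> V) k"
  by (auto simp: cube_monomial_def)

lemma sum_cube_monomial_eq_0:
  assumes "i < s" "i \<notin> U"
  shows "(\<Sum>k<2^s. cube_monomial U k) = 0"
  using assms
proof (induction s arbitrary: U)
  case (Suc s)
  have upper: "cube_monomial U (2^s + k) = cube_monomial (U - {s}) k" if "k < 2^s" for k
    using bit_add_exp_below[OF that] by (auto simp: cube_monomial_def add.commute)
  have halves: "(\<Sum>k<2^Suc s. cube_monomial U k)
      = (\<Sum>k<2^s. cube_monomial U k) + (\<Sum>k<2^s. cube_monomial (U - {s}) k)"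
  proof -
    have "(\<Sum>k<2^Suc s. cube_monomial U k) = (\<Sum>k<2^s + 2^s. cube_monomial U k)"
      by (simp add: mult_2)
    also have "\<dots> = (\<Sum>k<2^s. cube_monomial U k) + (\<Sum>k<2^s. cube_monomial U (2^s + k))"
      by (rule sum_lessThan_add)
    also have "\<dots> = (\<Sum>k<2^s. cube_monomial U k) + (\<Sum>k<2^s. cube_monomial (U - {s}) k)"
      using upper by (intro arg_cong2[where f = "(+)"] sum.cong) auto
    finally show ?thesis .
  qed
  \<comment> \<open>If s \<notin> U the two halves cancel; otherwise the lower half vanishes.\<close>
  show ?case
  proof (cases "s \<in> U")
    case True
    then have "cube_monomial U k = 0" if "k < 2^s" for k
      using that by (auto simp: cube_monomial_def bit_iff_odd intro!: bexI[of _ s])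
    moreover have "(\<Sum>k<2^s. cube_monomial (U - {s}) k) = 0"
      using Suc.prems True by (intro Suc.IH) (auto simp: less_Suc_eq)
    ultimately show ?thesis
      using halves by simp
  next
    case False
    then show ?thesis
      using halves by simp
  qed
qed simp

lemma sum_cube_monomial_mult_eq_0:
  assumes "finite U" "finite V" "card U + card V < s"
  shows "(\<Sum>k<2^s. cube_monomial U k * cube_monomial V k) = 0"
proof -
  have "card (U \<union> V) < card {..<s}"
    using assms card_Un_le[of U V] by simp
  then have "\<not> {..<s} \<subseteq> U \<union> V"
    using assms by (meson card_mono finite_UnI not_le)
  then obtain i where "i < s" "i \<notin> U \<union> V"
    by auto
  then show ?thesis
    unfolding cube_monomial_mult by (rule sum_cube_monomial_eq_0)
qed

definition scaled_monomial :: "nat \<Rightarrow> nat \<Rightarrow> (nat \<Rightarrow> bit) \<Rightarrow> bool" where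
  "scaled_monomial s d f \<longleftrightarrow>
     (\<exists>c U. finite U \<and> card U \<le> d \<and> (\<forall>k<2^s. f k = c * cube_monomial U k))"

lemma scaled_monomial_zero:
  assumes "\<And>k. k < 2^s \<Longrightarrow> f k = 0"
  shows "scaled_monomial s d f"
  unfolding scaled_monomial_def using assms by (intro exI[of _ 0] exI[of _ "{}"]) auto

lemma scaled_monomial_cong:
  assumes "\<And>k. k < 2^s \<Longrightarrow> f k = g k"
  shows "scaled_monomial s d f \<longleftrightarrow> scaled_monomial s d g"
  using assms unfolding scaled_monomial_def by simp

lemma sum_scaled_monomial_mult_eq_0:
  assumes "scaled_monomial s d f" "scaled_monomial s e g" "d + e < s"
  shows "(\<Sum>k<2^s. f k * g k) = 0"
proof -
  obtain c U where U: "finite U" "card U \<le> d" "\<And>k. k < 2^s \<Longrightarrow> f k = c * cube_monomial U k"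
    using assms(1) unfolding scaled_monomial_def by blast
  obtain c' V where V: "finite V" "card V \<le> e" "\<And>k. k < 2^s \<Longrightarrow> g k = c' * cube_monomial V k"
    using assms(2) unfolding scaled_monomial_def by blast
  have "(\<Sum>k<2^s. f k * g k) = (\<Sum>k<2^s. c * c' * (cube_monomial U k * cube_monomial V k))"
    using U(3) V(3) by (intro sum.cong) (simp_all add: ac_simps)
  also have "\<dots> = c * c' * (\<Sum>k<2^s. cube_monomial U k * cube_monomial V k)"
    by (simp only: sum_distrib_left)
  also have "\<dots> = 0"
  proof -
    have "card U + card V < s"
      using U(2) V(2) assms(3) by linarith
    then show ?thesis
      by (simp only: sum_cube_monomial_mult_eq_0[OF U(1) V(1)] mult_zero_right)
  qed
  finally show ?thesis .
qed

lemma sum_blockwise_scaled_monomial_mult_eq_0: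
  assumes "\<And>b. scaled_monomial s d (\<lambda>k. f (b * 2^s + k))"
    and "\<And>b. scaled_monomial s e (\<lambda>k. g (b * 2^s + k))"
    and "d + e < s"
  shows "(\<Sum>p<N * 2^s. f p * g p) = 0"
  using sum_scaled_monomial_mult_eq_0[OF assms]
  by (simp add: sum_lessThan_mult_blocks)

section \<open>Rows of the Reed--Muller generator matrices\<close>

lemma length_bvec [simp]: "length (bvec s i) = 2^s"
  by (simp add: bvec_def)

lemma nth_bvec:
  assumes "1 \<le> i" "k < 2^s"
  shows "bvec s i ! k = cube_monomial {i - 1} k"
  using assms by (simp add: bvec_def cube_monomial_def bit_iff_odd)

lemma length_foldr_bprod [simp]:
  "length (foldr bprod (map (bvec s) S) (bvec s 0)) = 2^s"
  by (induction S) (simp_all add: bprod_def)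

lemma nth_bprod:
  assumes "k < length u" "k < length v"
  shows "bprod u v ! k = u ! k * v ! k"
  using assms by (simp add: bprod_def)

lemma nth_foldr_bprod:
  assumes "\<forall>i\<in>set S. 1 \<le> i" "k < 2^s"
  shows "foldr bprod (map (bvec s) S) (bvec s 0) ! k = cube_monomial ((\<lambda>i. i - 1) ` set S) k"
  using assms(1)
proof (induction S)
  case Nil
  then show ?case
    using assms(2) by (simp add: bvec_def cube_monomial_def)
next
  case (Cons i S)
  then show ?case
    using assms(2) by (simp add: nth_bprod nth_bvec cube_monomial_mult)
qed

lemma Bmat_row:
  assumes "\<beta> \<in> set (Bmat s j)"
  obtains U where "length \<beta> = 2^s" "finite U" "int (card U) \<le> j"
    "\<And>k. k < 2^s \<Longrightarrow> \<beta> ! k = cube_monomial U k"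
proof -
  obtain S where S: "S \<in> set (subseqs [1..<s+1])" "int (length S) = j"
    "\<beta> = foldr bprod (map (bvec s) S) (bvec s 0)"
    using assms unfolding Bmat_def by (auto split: if_splits)
  have "\<forall>i\<in>set S. 1 \<le> i"
    using S(1) subseqs_powset[of "[1..<s+1]"] by auto
  moreover have "card ((\<lambda>i. i - 1) ` set S) \<le> length S"
    using card_image_le card_length le_trans by blast
  ultimately show ?thesis
    using S by (intro that[of "(\<lambda>i. i - 1) ` set S"]) (auto simp: nth_foldr_bprod)
qed

lemma Bmat_nonempty:
  assumes "d \<le> s"
  shows "Bmat s (int d) \<noteq> []"
proof -
  have "{1..d} \<in> set ` set (subseqs [1..<s+1])"
    using assms by (intro subset_subseqs) auto
  then obtain S where S: "S \<in> set (subseqs [1..<s+1])" "set S = {1..d}"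
    by blast
  then have "length S = d"
    using distinct_card[OF subseqs_distinctD[OF S(1)]] by simp
  then show ?thesis
    using S(1) by (auto simp: Bmat_def filter_empty_conv)
qed

lemma nth_concat_scaled_copies:
  assumes "t < length a" "k < length \<beta>"
  shows "concat (map (\<lambda>x. map ((*) x) \<beta>) a) ! (t * length \<beta> + k) = a ! t * \<beta> ! k"
  using assms
proof (induction a arbitrary: t)
  case (Cons x a)
  then show ?case
    by (cases t) (simp_all add: nth_append)
qed simp

lemma length_rep_wvec:
  assumes "i < l"
  shows "length (rep_vec (2^(l-i-1)) (wvec (i+1))) = 2^l"
proof -
  have "(2::nat) \<le> 2^(i+1)"
    by simp
  then have "length (wvec (i+1)) = 2^(i+1)"
    unfolding wvec_def by (simp only: length_append length_replicate list.size)
  moreover have "(2::nat)^(l-i-1) * 2^(i+1) = 2^l"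
    unfolding power_add[symmetric] using assms by simp
  ultimately show ?thesis
    by (simp add: rep_vec_def length_concat sum_list_replicate)
qed

lemma mult_add_less_mult:
  fixes t k n :: nat
  assumes "t < a" "k < n"
  shows "t * n + k < a * n"
proof -
  have "Suc t * n \<le> a * n"
    using assms(1) by (intro mult_le_mono1) simp
  then show ?thesis
    using assms(2) by simp
qed

lemma Mblk_row_block_kron:
  assumes "i < l" "row \<in> set (Mblk m l (int r) i)" "t < 2^l"
  shows "scaled_monomial (m-l) r (\<lambda>k. row ! (t * 2^(m-l) + k))"
proof -
  define a where "a = rep_vec (2^(l-i-1)) (wvec (i+1))"
  obtain \<beta> where \<beta>: "\<beta> \<in> set (Bmat (m-l) (int r - int i))"
    "row = concat (map (\<lambda>x. map ((*) x) \<beta>) a)"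
    using assms(1,2) unfolding Mblk_def kron_row_def a_def by auto
  obtain U where U: "length \<beta> = 2^(m-l)" "finite U" "int (card U) \<le> int r - int i"
    "\<And>k. k < 2^(m-l) \<Longrightarrow> \<beta> ! k = cube_monomial U k"
    using Bmat_row[OF \<beta>(1)] by blast
  have "t < length a"
    using assms(1,3) length_rep_wvec by (simp add: a_def)
  then have "row ! (t * 2^(m-l) + k) = a ! t * cube_monomial U k" if "k < 2^(m-l)" for k
    using nth_concat_scaled_copies[of t a k \<beta>] that U by (simp add: \<beta>(2))
  then show ?thesis
    unfolding scaled_monomial_def using U(2,3) by (intro exI[of _ "a ! t"] exI[of _ U]) auto
qed

lemma Mblk_row_block_padded:
  assumes "l \<le> m" "row \<in> set (Mblk m l (int r) l)" "t < 2^l"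
  shows "scaled_monomial (m-l) r (\<lambda>k. row ! (t * 2^(m-l) + k))"
proof -
  obtain g where g: "g \<in> set (Gmat_RM (m-l) (int r - int l))" "row = g @ replicate (2^m - length g) 0"
    using assms(2) unfolding Mblk_def by auto
  then obtain j where j: "j \<le> int r - int l" "g \<in> set (Bmat (m-l) j)"
    unfolding Gmat_RM_def by auto
  obtain U where U: "length g = 2^(m-l)" "finite U" "int (card U) \<le> j"
    "\<And>k. k < 2^(m-l) \<Longrightarrow> g ! k = cube_monomial U k"
    using Bmat_row[OF j(2)] by blast
  show ?thesis
  proof (cases "t = 0")
    case True
    then show ?thesis
      unfolding scaled_monomial_def using U j
      by (intro exI[of _ 1] exI[of _ U]) (auto simp: g(2) nth_append)
  next
    case False
    show ?thesis
    proof (rule scaled_monomial_zero)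
      fix k :: nat
      assume "k < 2^(m-l)"
      then have "t * 2^(m-l) + k < 2^l * 2^(m-l)"
        using assms(3) by (rule mult_add_less_mult[rotated])
      also have "\<dots> = 2^m"
        using assms(1) by (simp flip: power_add)
      finally have "t * 2^(m-l) + k < 2^m" .
      moreover have "length g \<le> t * 2^(m-l) + k"
        using False U(1) by (simp add: trans_le_add1)
      ultimately show "row ! (t * 2^(m-l) + k) = 0"
        by (simp add: g(2) nth_append)
    qed
  qed
qed

lemma Mstack_row_block:
  assumes "l \<le> m" "row \<in> set (Mstack m l (int r))" "t < 2^l"
  shows "scaled_monomial (m-l) r (\<lambda>k. row ! (t * 2^(m-l) + k))"
proof -
  have "\<exists>i\<in>set [0..<l+1]. row \<in> set (Mblk m l (int r) i)"
    using assms(2) unfolding Mstack_def by auto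
  then obtain i where i: "i < l + 1" "row \<in> set (Mblk m l (int r) i)"
    by (metis atLeastLessThan_iff set_upt)
  show ?thesis
  proof (cases "i < l")
    case True
    then show ?thesis
      using Mblk_row_block_kron i(2) assms(3) by blast
  next
    case False
    then have "i = l"
      using i(1) by simp
    then show ?thesis
      using Mblk_row_block_padded i(2) assms(1,3) by blast
  qed
qed

lemma Mstack_nonempty:
  assumes "r \<le> m - l"
  shows "Mstack m l (int r) \<noteq> []"
proof -
  have "Bmat (m-l) (int r) \<noteq> []"
    using assms by (rule Bmat_nonempty)
  then have "Mblk m l (int r) 0 \<noteq> []"
    by (auto simp: Mblk_def kron_row_def Gmat_RM_def)
  then show ?thesis
    by (cases "l = 0") (auto simp: Mstack_def)
qed

section \<open>The semi-infinite generator matrix\<close>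

lemma block_range_iff:
  fixes n :: nat
  assumes "k < n"
  shows "j * n \<le> b * n + k \<and> b * n + k < j * n + L * n \<longleftrightarrow> j \<le> b \<and> b < j + L"
proof -
  have "(b * n + k) div n = b"
    using assms by simp
  then show ?thesis
    using assms less_eq_div_iff_mult_less_eq[of n j "b * n + k"] div_less_iff_less_mult[of n "b * n + k" "j + L"]
    by (simp add: add_mult_distrib)
qed

lemma semiG_block:
  fixes r :: int and m l q b k :: nat
  assumes "l \<le> m" "k < 2^(m-l)"
  defines "M \<equiv> Mstack m l r"
  defines "j \<equiv> q div length M"
  shows "semiG m l r q (b * 2^(m-l) + k) =
    (if j \<le> b \<and> b < j + 2^l then M ! (q mod length M) ! ((b - j) * 2^(m-l) + k) else 0)"
proof -
  have "(2::nat)^m = 2^l * 2^(m-l)"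
    using assms(1) by (simp flip: power_add)
  moreover have "j \<le> b \<Longrightarrow> b * 2^(m-l) + k - j * 2^(m-l) = (b - j) * 2^(m-l) + k"
    by (simp add: diff_mult_distrib)
  ultimately show ?thesis
    using block_range_iff[OF assms(2), of j b "2^l"]
    unfolding semiG_def Let_def M_def[symmetric] j_def[symmetric] by auto
qed

(* semiG takes row q mod (number of rows) of the stack, which is junk for an empty stack. *)

lemma semiG_block_scaled_monomial:
  assumes "l \<le> m" "Mstack m l (int r) \<noteq> []"
  shows "scaled_monomial (m-l) r (\<lambda>k. semiG m l (int r) q (b * 2^(m-l) + k))"
proof -
  define M where "M = Mstack m l (int r)"
  define j where "j = q div length M"
  have block: "semiG m l (int r) q (b * 2^(m-l) + k) =
      (if j \<le> b \<and> b < j + 2^l then M ! (q mod length M) ! ((b - j) * 2^(m-l) + k) else 0)"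
    if "k < 2^(m-l)" for k
    using semiG_block[OF assms(1) that] by (simp only: M_def j_def)
  show ?thesis
  proof (cases "j \<le> b \<and> b < j + 2^l")
    case True
    have "M ! (q mod length M) \<in> set M"
      using assms(2) by (simp add: M_def)
    moreover have "b - j < 2^l"
      using True by linarith
    ultimately have "scaled_monomial (m-l) r (\<lambda>k. M ! (q mod length M) ! ((b - j) * 2^(m-l) + k))"
      unfolding M_def by (rule Mstack_row_block[OF assms(1)])
    then show ?thesis
      using True block by (subst scaled_monomial_cong) auto
  next
    case False
    show ?thesis
    proof (rule scaled_monomial_zero)
      fix k :: nat
      assume "k < 2^(m-l)"
      then show "semiG m l (int r) q (b * 2^(m-l) + k) = 0"
        by (simp only: block if_not_P[OF False])
    qed
  qed
qed

lemma semiG_nonzero_imp_less: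
  assumes "semiG m l r q p \<noteq> 0"
  shows "p < q * 2^(m-l) + 2^m"
proof -
  define j where "j = q div length (Mstack m l r)"
  have "p < j * 2^(m-l) + 2^m"
    using assms unfolding semiG_def Let_def j_def[symmetric] by (auto split: if_splits)
  moreover have "j * 2^(m-l) \<le> q * 2^(m-l)"
    unfolding j_def by (intro mult_le_mono1) simp
  ultimately show ?thesis
    by linarith
qed

lemma semiG_row_Gamma2: "semiG m l r q \<in> Gamma2"
proof -
  have "{p. semiG m l r q p \<noteq> 0} \<subseteq> {..<q * 2^(m-l) + 2^m}"
    using semiG_nonzero_imp_less by blast
  then show ?thesis
    unfolding Gamma2_def mem_Collect_eq by (rule finite_subset) simp
qed

lemma inner2_semiG_rows:
  assumes "l \<le> m" "Mstack m l (int r) \<noteq> []" "2 * r < m - l"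
  shows "inner2 (semiG m l (int r) q) (semiG m l (int r) q') = 0"
proof -
  let ?N = "q + 2^l"
  have "{p. semiG m l (int r) q p \<noteq> 0} \<subseteq> {..<q * 2^(m-l) + 2^m}"
    using semiG_nonzero_imp_less by blast
  also have "q * 2^(m-l) + 2^m = ?N * 2^(m-l)"
    using assms(1) by (simp add: add_mult_distrib flip: power_add)
  finally have "{p. semiG m l (int r) q p \<noteq> 0} \<subseteq> {..<?N * 2^(m-l)}" .
  then have "inner2 (semiG m l (int r) q) (semiG m l (int r) q')
      = (\<Sum>p<?N * 2^(m-l). semiG m l (int r) q p * semiG m l (int r) q' p)"
    by (rule inner2_eq_sum[OF finite_lessThan])
  also have "\<dots> = 0"
    using semiG_block_scaled_monomial[OF assms(1,2)] assms(3)
    by (intro sum_blockwise_scaled_monomial_mult_eq_0) auto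
  finally show ?thesis .
qed

theorem mainTheorem12:
  fixes l m r :: nat
  assumes "1 \<le> l" and "l \<le> m"
    and "int r \<le> (int m - int l - 1) div 2"
  shows "gen_code (semiG m l (int r)) \<subseteq> dual_code (gen_code (semiG m l (int r)))"
proof -
  have "2 * r < m - l"
    using assms(2,3) by linarith
  moreover have "Mstack m l (int r) \<noteq> []"
    using calculation by (intro Mstack_nonempty) simp
  ultimately show ?thesis
    using assms(2) semiG_row_Gamma2 inner2_semiG_rows by (intro gen_code_self_orthogonal)
qed

end
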